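(* Let $\mathbf{F}\in\{\mathbf{R},\mathbf{C}\}$, let $A_1,\dots,A_n\in\mathbf{H}_d$ be positive semidefinite, let $Z_*=X_*X_*^*$ with $X_*\in\mathbf{F}^{d\times r}$ be positive semidefinite of rank $r$ with eigendecomposition $Z_*=U\Lambda U^*$ ($U^*U=I_r$, smallest nonzero eigenvalue $\lambda_r(Z_* )>0$), let $\xi\in\mathbf{R}^n$ and $y=\mathcal{A}(Z_* )+\xi$. Suppose: (Dual certificate) for some $\epsilon\ge0$ there exists $\lambda\in\mathbf{R}^n$ such that $Y=\mathcal{A}^*(\lambda)$ satisfies $\mathcal{P}_{\mathcal{T}^\perp}(Y)\succeq P_U^\perp$ and $\|\mathcal{P}_{\mathcal{T}}(Y)\|_F\le\epsilon$; (Approximate isometry) for some $\mu_{\mathcal{T}},L_{\mathcal{T}}>0$, $\frac1{\sqrt n}\|\mathcal{A}(H)\|\ge\mu_{\mathcal{T}}\|\mathcal{P}_{\mathcal{T}}(H)\|_F-L_{\mathcal{T}}\operatorname{tr}(\mathcal{P}_{\mathcal{T}^\perp}(H))$ for all $H\in\mathbf{H}_d$ with $\mathcal{P}_{\mathcal{T}^\perp}(H)\succeq0$; and $\mu_{\mathcal{T}}>L_{\mathcal{T}}\epsilon$. Suppose the integer $p$ satisfies $$p>\tau:=2\Big(\frac{1+L_{\mathcal{T}}\sqrt n\|\lambda\|}{\mu_{\mathcal{T}}-L_{\mathcal{T}}\epsilon}\Big)^2\frac{\|\mathcal{A}^*(y)\|_{\mathrm{op}}}{n\lambda_r(Z_*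 )}-2 .$$ Then every second-order critical point $X\in\mathbf{F}^{d\times p}$ of $f_p(X)=\|y-\mathcal{A}(XX^* )\|^2$ satisfies $$\|XX^*-Z_*\|_F\le\|\mathcal{P}_{\mathcal{T}}(XX^*-Z_* )\|_F+\operatorname{tr}\mathcal{P}_{\mathcal{T}^\perp}(XX^* )\le\frac{p+2}{p-\tau}\Big(\frac{1+\epsilon+\sqrt n\|\lambda\|(L_{\mathcal{T}}+\mu_{\mathcal{T}})}{\mu_{\mathcal{T}}-L_{\mathcal{T}}\epsilon}\Big)^2\sqrt{2r}\,\frac{\|\mathcal{A}^*(\xi)\|_{\mathrm{op}}}{n}.$$
   Context: $\mathbf{H}_d$: $d\times d$ Hermitian matrices over $\mathbf{F}$ with real Frobenius inner product $\langle A,B\rangle=\operatorname{Re}\operatorname{tr}(A^*B)$. $\mathcal{A}(S)=(\langle A_1,S\rangle,\dots,\langle A_n,S\rangle)\in\mathbf{R}^n$, $\mathcal{A}^*(z)=\sum_iz_iA_i$. $P_U=UU^*$, $P_U^\perp=I_d-P_U$. $\mathcal{T}=\{UB^*+BU^*:B\in\mathbf{F}^{d\times r}\}\subset\mathbf{H}_d$, with orthogonal projections $\mathcal{P}_{\mathcal{T}}(S)=SP_U+P_USP_U^\perp$ and $\mathcal{P}_{\mathcal{T}^\perp}(S)=P_U^\perp SP_U^\perp$. A second-order critical point is a point where the gradient is zero and the Hessian is positive semidefinite (in the complex case, with respect to real and imaginary parts of $X$). *)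

theory Defs
  imports "HOL-Analysis.Analysis"
begin

text \<open>Matrices over F are represented as complex matrices (index types give the
dimensions); F is either the reals (entries in \<real>) or the complex numbers (UNIV).\<close>

definition in_F :: "complex set \<Rightarrow> complex^'c^'r \<Rightarrow> bool" where
  "in_F F M \<longleftrightarrow> (\<forall>i j. M $ i $ j \<in> F)"

definition cadj :: "complex^'c^'r \<Rightarrow> complex^'r^'c" where
  "cadj M = (\<chi> i j. cnj (M $ j $ i))"

definition hinner :: "complex^'d^'d \<Rightarrow> complex^'d^'d \<Rightarrow> real" where
  "hinner A B = Re (trace (cadj A ** B))"

definition fro_norm :: "complex^'c^'r \<Rightarrow> real" where
  "fro_norm M = sqrt (\<Sum>i\<in>UNIV. \<Sum>j\<in>UNIV. (cmod (M $ i $ j))\<^sup>2)"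

definition op_norm :: "complex^'c^'r \<Rightarrow> real" where
  "op_norm M = onorm (\<lambda>v. M *v v)"

definition hermitian :: "complex^'d^'d \<Rightarrow> bool" where
  "hermitian M \<longleftrightarrow> cadj M = M"

definition herm_F :: "complex set \<Rightarrow> complex^'d^'d \<Rightarrow> bool" where
  "herm_F F M \<longleftrightarrow> in_F F M \<and> hermitian M"

definition psd :: "complex^'d^'d \<Rightarrow> bool" where
  "psd M \<longleftrightarrow> hermitian M \<and> (\<forall>v::complex^'d. 0 \<le> Re (\<Sum>i\<in>UNIV. cnj (v $ i) * (M *v v) $ i))"

definition loewner_ge :: "complex^'d^'d \<Rightarrow> complex^'d^'d \<Rightarrow> bool" where
  "loewner_ge S T \<longleftrightarrow> psd (S - T)"

definition min_nonzero_eig :: "complex^'d^'d \<Rightarrow> real" where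
  "min_nonzero_eig Z = Min {\<mu>::real. \<mu> \<noteq> 0 \<and> (\<exists>v. v \<noteq> 0 \<and> Z *v v = complex_of_real \<mu> *s v)}"

definition meas :: "('n \<Rightarrow> complex^'d^'d) \<Rightarrow> complex^'d^'d \<Rightarrow> real^'n" where
  "meas A S = (\<chi> i. hinner (A i) S)"

definition meas_adj :: "('n::finite \<Rightarrow> complex^'d^'d) \<Rightarrow> real^'n \<Rightarrow> complex^'d^'d" where
  "meas_adj A z = (\<Sum>i\<in>UNIV. (z $ i) *\<^sub>R A i)"

definition projU :: "complex^'r^'d \<Rightarrow> complex^'d^'d" where
  "projU U = U ** cadj U"

definition projU_perp :: "complex^'r^'d \<Rightarrow> complex^'d^'d" where
  "projU_perp U = mat 1 - projU U"

definition P_T :: "complex^'r^'d \<Rightarrow> complex^'d^'d \<Rightarrow> complex^'d^'d" where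
  "P_T U S = S ** projU U + projU U ** S ** projU_perp U"

definition P_Tperp :: "complex^'r^'d \<Rightarrow> complex^'d^'d \<Rightarrow> complex^'d^'d" where
  "P_Tperp U S = projU_perp U ** S ** projU_perp U"

text \<open>second-order critical point of a real-valued f on F^{d\<times>p}: in every real
direction D (entries in F, i.e. w.r.t. real and imaginary parts in the complex case)
the first directional derivative vanishes (zero gradient) and the second
directional derivative is nonnegative (PSD Hessian).\<close>
definition socp :: "complex set \<Rightarrow> (complex^'p^'d \<Rightarrow> real) \<Rightarrow> complex^'p^'d \<Rightarrow> bool" where
  "socp F f X \<longleftrightarrow> in_F F X \<and>
     (\<forall>D. in_F F D \<longrightarrow>
        deriv (\<lambda>t. f (X + t *\<^sub>R D)) 0 = 0 \<and>
        0 \<le> deriv (deriv (\<lambda>t. f (X + t *\<^sub>R D))) 0)"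

end

theory Submission
  imports Defs
begin

text \<open>Write \<open>W = X X\<^sup>*\<close>, \<open>H = W - Z\<^sub>*\<close> and \<open>S = \<A>\<^sup>*(\<A>(W) - y)\<close>, so that
  \<open>\<nabla>f\<^sub>p(X) = 4 S X\<close>. First-order stationarity forces \<open>S X = 0\<close>, hence \<open>\<langle>S, W\<rangle> = 0\<close>;
  testing the Hessian in the rank-one directions \<open>u e\<^sub>j\<^sup>*\<close> and summing over the \<open>p\<close>
  columns gives \<open>S \<succeq> -(2/(p+2)) \<parallel>\<A>\<^sup>*(y)\<parallel>\<^sub>o\<^sub>p I\<close>. Since \<open>S X = 0\<close>, an eigenvector
  \<open>u\<^sub>k\<close> of \<open>Z\<^sub>*\<close> may be replaced by \<open>H u\<^sub>k / \<lambda>\<^sub>k\<close> in the quadratic form of \<open>S\<close>, so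
  \<open>-\<langle>S, Z\<^sub>*\<rangle>\<close> is at most \<open>2 \<parallel>\<A>\<^sup>*(y)\<parallel>\<^sub>o\<^sub>p \<parallel>P\<^sub>T(H)\<parallel>\<^sup>2 / ((p+2) \<lambda>\<^sub>r)\<close>, and
  \<open>\<parallel>\<A>(H)\<parallel>\<^sup>2 = -\<langle>S, Z\<^sub>*\<rangle> + \<langle>\<A>\<^sup>*(\<xi>), H\<rangle>\<close>.
  Pairing \<open>H\<close> with the dual certificate and applying the approximate isometry bound
  \<open>\<parallel>P\<^sub>T(H)\<parallel>\<close> and \<open>\<parallel>P\<^sub>T(H)\<parallel> + tr P\<^sub>T\<^sub>\<bottom>(W)\<close> by multiples of \<open>\<parallel>\<A>(H)\<parallel>/\<surd>n\<close>; the first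
  bound turns the curvature term into the fraction \<open>(\<tau>+2)/(p+2)\<close> of \<open>\<parallel>\<A>(H)\<parallel>\<^sup>2\<close>,
  which is absorbed for \<open>p > \<tau>\<close>, leaving only the noise \<open>\<A>\<^sup>*(\<xi>)\<close>.\<close>

lemma inner_matrix:
  "inner (M::complex^'c^'r) N = (\<Sum>i\<in>UNIV. \<Sum>j\<in>UNIV. Re (cnj (M$i$j) * N$i$j))"
  by (simp add: inner_vec_def inner_complex_def)

lemma inner_cvec: "inner (u::complex^'d) v = (\<Sum>i\<in>UNIV. Re (cnj (u$i) * v$i))"
  by (simp add: inner_vec_def inner_complex_def)

lemma norm_matrix_sq: "(norm (M::complex^'c^'r))\<^sup>2 = (\<Sum>i\<in>UNIV. \<Sum>j\<in>UNIV. (cmod (M$i$j))\<^sup>2)"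
  by (simp add: norm_vec_def L2_set_def sum_nonneg)

lemma fro_norm_eq_norm: "fro_norm M = norm M"
  unfolding fro_norm_def using norm_matrix_sq[of M] by (metis norm_ge_zero real_sqrt_unique)

lemma cadj_nth [simp]: "cadj M $ i $ j = cnj (M $ j $ i)"
  by (simp add: cadj_def)

lemma cadj_cadj [simp]: "cadj (cadj M) = M"
  by (simp add: vec_eq_iff)

lemma cadj_add [simp]: "cadj (A + B) = cadj A + cadj B"
  by (simp add: vec_eq_iff)

lemma cadj_diff [simp]: "cadj (A - B) = cadj A - cadj B"
  by (simp add: vec_eq_iff)

lemma cadj_scaleR [simp]: "cadj (c *\<^sub>R A) = c *\<^sub>R cadj A"
  by (simp add: vec_eq_iff)

lemma cadj_mat_1 [simp]: "cadj (mat 1 :: complex^'n^'n) = mat 1"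
  by (simp add: vec_eq_iff mat_def)

lemma cadj_sum: "cadj (sum f S) = (\<Sum>x\<in>S. cadj (f x))"
  by (induction S rule: infinite_finite_induct) (auto simp: vec_eq_iff)

lemma cadj_matrix_mult: "cadj (A ** B) = cadj B ** cadj (A::complex^'n^'m)"
  by (simp add: vec_eq_iff matrix_matrix_mult_def mult.commute)

lemma norm_cadj [simp]: "norm (cadj (M::complex^'c^'r)) = norm M"
proof -
  have "(norm (cadj M))\<^sup>2 = (norm M)\<^sup>2"
    unfolding norm_matrix_sq by (simp, rule sum.swap)
  then show ?thesis by simp
qed

lemma inner_eq_Re_trace: "inner (M::complex^'c^'r) N = Re (trace (cadj M ** N))"
proof -
  have "trace (cadj M ** N) = (\<Sum>j\<in>UNIV. \<Sum>i\<in>UNIV. cnj (M$i$j) * N$i$j)"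
    unfolding trace_def matrix_matrix_mult_def by simp
  also have "\<dots> = (\<Sum>i\<in>UNIV. \<Sum>j\<in>UNIV. cnj (M$i$j) * N$i$j)"
    by (rule sum.swap)
  finally show ?thesis unfolding inner_matrix by simp
qed

lemma hinner_eq_inner: "hinner A B = inner A B"
  by (simp add: hinner_def inner_eq_Re_trace)

lemma psd_iff_inner: "psd M \<longleftrightarrow> hermitian M \<and> (\<forall>v. 0 \<le> inner v (M *v v))"
  by (simp add: psd_def inner_cvec)

lemma inner_matrix_mult_left:
  "inner (A::complex^'p^'m) ((B::complex^'n^'m) ** C) = inner (cadj B ** A) C"
  unfolding inner_eq_Re_trace cadj_matrix_mult cadj_cadj by (simp add: matrix_mul_assoc)

lemma inner_matrix_mult_right:
  "inner (A::complex^'p^'m) ((B::complex^'n^'m) ** C) = inner (A ** cadj C) B"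
proof -
  have "trace (cadj A ** (B ** C)) = trace (C ** cadj A ** B)"
    using trace_mul_sym[of "cadj A ** B" C] by (simp add: matrix_mul_assoc)
  then show ?thesis
    unfolding inner_eq_Re_trace cadj_matrix_mult cadj_cadj by (simp add: matrix_mul_assoc)
qed

lemma inner_matrix_vector_mult:
  "inner (u::complex^'m) ((B::complex^'n^'m) *v v) = inner (cadj B *v u) v"
proof -
  have "(\<Sum>i\<in>UNIV. cnj (u$i) * (B *v v)$i) = (\<Sum>i\<in>UNIV. \<Sum>j\<in>UNIV. cnj (u$i) * B$i$j * v$j)"
    by (simp add: matrix_vector_mult_def sum_distrib_left mult.assoc)
  also have "\<dots> = (\<Sum>j\<in>UNIV. \<Sum>i\<in>UNIV. cnj (u$i) * B$i$j * v$j)"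
    by (rule sum.swap)
  also have "\<dots> = (\<Sum>j\<in>UNIV. cnj ((cadj B *v u)$j) * v$j)"
    by (simp add: matrix_vector_mult_def sum_distrib_right sum_distrib_left mult_ac)
  finally show ?thesis by (simp only: inner_cvec Re_sum[symmetric])
qed

lemma matrix_add_rdistrib: "((A::'a::semiring_1^'n^'m) + B) ** C = A ** C + B ** C"
  by (simp add: vec_eq_iff matrix_matrix_mult_def distrib_right sum.distrib)

lemma matrix_diff_rdistrib: "((A::'a::ring_1^'n^'m) - B) ** C = A ** C - B ** C"
  by (simp add: vec_eq_iff matrix_matrix_mult_def left_diff_distrib sum_subtractf)

lemma matrix_diff_ldistrib: "(A::'a::ring_1^'n^'m) ** (B - C) = A ** B - A ** C"
  by (simp add: vec_eq_iff matrix_matrix_mult_def right_diff_distrib sum_subtractf)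

lemma matrix_scaleR_right: "(A::'a::real_algebra_1^'n^'m) ** (c *\<^sub>R B) = c *\<^sub>R (A ** B)"
  by (simp add: matrix_scalar_ac scalar_matrix_assoc)

lemmas matrix_mult_simps = matrix_add_rdistrib matrix_add_ldistrib matrix_diff_rdistrib
  matrix_diff_ldistrib scalar_matrix_assoc[symmetric] matrix_scaleR_right matrix_mul_assoc

lemma matrix_vector_mult_scaleR: "(A::complex^'n^'m) *v (c *\<^sub>R x) = c *\<^sub>R (A *v x)"
  using linear_scale[OF matrix_vector_mul_linear[of A]] by simp

lemma column_matrix_mult: "column j (M ** B) = M *v column j B"
  by (simp add: column_def matrix_matrix_mult_def matrix_vector_mult_def vec_eq_iff)

lemma inner_columns:
  "inner (M::complex^'c^'r) N = (\<Sum>j\<in>UNIV. inner (column j M) (column j N))"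
  unfolding inner_matrix inner_cvec column_def by (simp, rule sum.swap)

lemma norm_sq_columns: "(norm (M::complex^'c^'r))\<^sup>2 = (\<Sum>j\<in>UNIV. (norm (column j M))\<^sup>2)"
  by (simp add: power2_norm_eq_inner inner_columns[of M M])

lemma hermitian_nth: "hermitian A \<Longrightarrow> A$j$i = cnj (A$i$j)"
  unfolding hermitian_def by (metis cadj_nth)

lemma hermitian_matrix_mult_cadj: "hermitian (B ** cadj B)"
  by (simp add: hermitian_def cadj_matrix_mult)

lemma hermitian_inner_commute:
  assumes "hermitian A"
  shows "inner x (A *v u) = inner u (A *v x)"
  using assms inner_matrix_vector_mult[of x A u] by (simp add: hermitian_def inner_commute)

lemma inner_matrix_mult_cadj:
  "inner (G::complex^'d^'d) (B ** cadj B) = (\<Sum>j\<in>UNIV. inner (column j B) (G *v column j B))"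
proof -
  have "inner G (B ** cadj B) = inner (G ** B) B"
    by (simp add: inner_matrix_mult_right)
  also have "\<dots> = (\<Sum>j\<in>UNIV. inner (G *v column j B) (column j B))"
    by (simp add: inner_columns[of "G ** B"] column_matrix_mult)
  finally show ?thesis by (simp add: inner_commute)
qed

lemma psd_matrix_mult_cadj: "psd (B ** cadj B)"
proof -
  have "inner v ((B ** cadj B) *v v) = (norm (cadj B *v v))\<^sup>2" for v
    by (simp add: matrix_vector_mul_assoc[symmetric] inner_matrix_vector_mult power2_norm_eq_inner)
  then show ?thesis by (simp add: psd_iff_inner hermitian_matrix_mult_cadj)
qed

lemma Re_trace_matrix_mult_cadj: "Re (trace (B ** cadj B)) = (norm B)\<^sup>2"
  by (metis cadj_cadj inner_eq_Re_trace norm_cadj power2_norm_eq_inner)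

lemma norm_matrix_mult_cadj_le: "norm (B ** cadj (B::complex^'c^'r)) \<le> (norm B)\<^sup>2"
proof -
  have entry: "cmod ((B ** cadj B)$a$b) \<le> norm (B$a) * norm (B$b)" for a b
  proof -
    have "cmod ((B ** cadj B)$a$b) \<le> (\<Sum>c\<in>UNIV. \<bar>cmod (B$a$c)\<bar> * \<bar>cmod (B$b$c)\<bar>)"
      unfolding matrix_matrix_mult_def by (simp add: norm_sum norm_mult order_trans[OF norm_sum])
    also have "\<dots> \<le> L2_set (\<lambda>c. cmod (B$a$c)) UNIV * L2_set (\<lambda>c. cmod (B$b$c)) UNIV"
      by (rule L2_set_mult_ineq)
    finally show ?thesis by (simp add: norm_vec_def)
  qed
  have "(norm (B ** cadj B))\<^sup>2 \<le> (\<Sum>a\<in>UNIV. \<Sum>b\<in>UNIV. (norm (B$a))\<^sup>2 * (norm (B$b))\<^sup>2)"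
    unfolding norm_matrix_sq
    by (intro sum_mono) (metis entry norm_ge_zero power_mono power_mult_distrib)
  also have "\<dots> = ((norm B)\<^sup>2)\<^sup>2"
    by (simp add: norm_vec_def L2_set_def sum_nonneg power2_eq_square sum_product)
  finally show ?thesis by (rule power2_le_imp_le) simp
qed

lemma psd_inner_Cauchy_Schwarz:
  assumes "psd A"
  shows "(inner u (A *v x))\<^sup>2 \<le> inner u (A *v u) * inner x (A *v x)"
proof -
  define a where "a = inner u (A *v u)"
  define b where "b = inner u (A *v x)"
  define c where "c = inner x (A *v x)"
  have herm: "hermitian A" and nonneg: "\<And>v. 0 \<le> inner v (A *v v)"
    using assms by (auto simp: psd_iff_inner)
  have quadratic: "0 \<le> a + 2 * s * b + s\<^sup>2 * c" for s :: real
  proof -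
    have "inner (u + s *\<^sub>R x) (A *v (u + s *\<^sub>R x)) = a + s * inner x (A *v u) + s * b + s\<^sup>2 * c"
      by (simp add: a_def b_def c_def matrix_vector_mult_scaleR power2_eq_square algebra_simps)
    then show ?thesis
      using nonneg[of "u + s *\<^sub>R x"] hermitian_inner_commute[OF herm, of x u] b_def by simp
  qed
  show ?thesis
  proof (cases "c = 0")
    case True
    have "b = 0"
    proof (rule ccontr)
      assume "b \<noteq> 0"
      then show False using quadratic[of "-(a + 1) / (2 * b)"] True by (simp add: field_simps)
    qed
    then show ?thesis using True b_def c_def by simp
  next
    case False
    then have "c > 0" using nonneg[of x] unfolding c_def by linarith
    then show ?thesis
      using quadratic[of "- b / c"] by (simp add: a_def b_def c_def power2_eq_square field_simps)
  qed
qed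

lemma bounded_linear_matrix_vector_mult: "bounded_linear (\<lambda>v::complex^'d. (G::complex^'d^'e) *v v)"
  using linear_conv_bounded_linear matrix_vector_mul_linear by blast

lemma op_norm_nonneg: "0 \<le> op_norm G"
  unfolding op_norm_def using onorm_pos_le[OF bounded_linear_matrix_vector_mult] .

lemma norm_matrix_vector_mult_le: "norm (G *v v) \<le> op_norm G * norm v"
  unfolding op_norm_def using onorm[OF bounded_linear_matrix_vector_mult] .

lemma abs_inner_le_op_norm: "\<bar>inner v (G *v v)\<bar> \<le> op_norm G * (norm v)\<^sup>2"
proof -
  have "\<bar>inner v (G *v v)\<bar> \<le> norm v * norm (G *v v)" by (rule Cauchy_Schwarz_ineq2)
  also have "\<dots> \<le> norm v * (op_norm G * norm v)" by (simp add: mult_left_mono norm_matrix_vector_mult_le)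
  finally show ?thesis by (simp add: power2_eq_square mult_ac)
qed

lemma norm_matrix_mult_le_op_norm: "norm (G ** M) \<le> op_norm G * norm M"
proof -
  have "(norm (G ** M))\<^sup>2 = (\<Sum>k\<in>UNIV. (norm (G *v column k M))\<^sup>2)"
    by (simp add: norm_sq_columns[of "G ** M"] column_matrix_mult)
  also have "\<dots> \<le> (\<Sum>k\<in>UNIV. (op_norm G * norm (column k M))\<^sup>2)"
    by (intro sum_mono power_mono norm_matrix_vector_mult_le) simp
  also have "\<dots> = (op_norm G * norm M)\<^sup>2"
    by (simp add: norm_sq_columns[of M] power_mult_distrib sum_distrib_left)
  finally show ?thesis
    by (rule power2_le_imp_le) (simp add: op_norm_nonneg)
qed

lemma inner_matrix_mult_cadj_le_op_norm: "inner G (B ** cadj B) \<le> op_norm G * (norm B)\<^sup>2"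
proof -
  have "inner G (B ** cadj B) \<le> (\<Sum>j\<in>UNIV. op_norm G * (norm (column j B))\<^sup>2)"
    unfolding inner_matrix_mult_cadj by (intro sum_mono) (metis abs_le_D1 abs_inner_le_op_norm)
  then show ?thesis by (simp add: norm_sq_columns[of B] sum_distrib_left)
qed

context
  fixes U :: "complex^'r^'d"
  assumes isometry: "cadj U ** U = mat 1"
begin

lemma projU_idem: "projU U ** projU U = projU U"
  unfolding projU_def by (metis matrix_mul_assoc matrix_mul_rid isometry)

lemma projU_perp_mult_U: "projU_perp U ** U = 0"
proof -
  have "projU U ** U = U"
    unfolding projU_def by (metis matrix_mul_assoc matrix_mul_rid isometry)
  then show ?thesis unfolding projU_perp_def by (simp add: matrix_diff_rdistrib)
qed

lemma projU_mult_perp: "projU U ** projU_perp U = 0"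
  unfolding projU_perp_def by (simp add: matrix_diff_ldistrib projU_idem)

lemma projU_perp_mult_projU: "projU_perp U ** projU U = 0"
  unfolding projU_perp_def by (simp add: matrix_diff_rdistrib projU_idem)

lemma projU_perp_idem: "projU_perp U ** projU_perp U = projU_perp U"
  using projU_mult_perp unfolding projU_perp_def by (simp add: matrix_diff_rdistrib)

lemma cadj_projU [simp]: "cadj (projU U) = projU U"
  unfolding projU_def by (simp add: cadj_matrix_mult)

lemma cadj_projU_perp [simp]: "cadj (projU_perp U) = projU_perp U"
  unfolding projU_perp_def by simp

lemma P_T_add_P_Tperp: "P_T U M + P_Tperp U M = M"
proof -
  have "projU U ** M ** projU_perp U + projU_perp U ** M ** projU_perp U = M ** projU_perp U"
    by (simp add: projU_perp_def matrix_diff_rdistrib matrix_diff_ldistrib)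
  moreover have "M ** projU U + M ** projU_perp U = M"
    by (simp add: projU_perp_def matrix_diff_ldistrib)
  ultimately show ?thesis unfolding P_T_def P_Tperp_def by (simp add: add.assoc)
qed

lemma P_Tperp_P_T: "P_Tperp U (P_T U M) = 0"
proof -
  have "P_Tperp U (P_T U M) = projU_perp U ** M ** (projU U ** projU_perp U)
      + (projU_perp U ** projU U) ** M ** (projU_perp U ** projU_perp U)"
    unfolding P_Tperp_def P_T_def by (simp add: matrix_mult_simps)
  then show ?thesis by (simp add: projU_mult_perp projU_perp_mult_projU)
qed

lemma inner_P_Tperp: "inner (P_Tperp U G) K = inner G (P_Tperp U K)"
proof -
  have "inner G (P_Tperp U K) = inner G (projU_perp U ** (K ** projU_perp U))"
    unfolding P_Tperp_def by (simp add: matrix_mul_assoc)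
  also have "\<dots> = inner (projU_perp U ** G) (K ** projU_perp U)"
    by (simp add: inner_matrix_mult_left)
  also have "\<dots> = inner (projU_perp U ** G ** projU_perp U) K"
    by (simp add: inner_matrix_mult_right)
  finally show ?thesis unfolding P_Tperp_def by simp
qed

lemma inner_P_T: "inner G (P_T U M) = inner (P_T U G) (P_T U M)"
proof -
  have "inner G (P_T U M) = inner (P_T U G + P_Tperp U G) (P_T U M)"
    by (simp add: P_T_add_P_Tperp)
  then show ?thesis by (simp add: inner_add_left inner_P_Tperp P_Tperp_P_T)
qed

lemma norm_mult_projU: "norm (M ** projU U) = norm (M ** U)"
proof -
  have "inner (M ** projU U) (M ** projU U) = inner (M ** U ** (cadj U ** U)) (M ** U)"
    unfolding projU_def by (simp add: inner_matrix_mult_right matrix_mul_assoc)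
  then show ?thesis by (simp add: isometry flip: power2_norm_eq_inner)
qed

lemma norm_P_T_sq:
  "(norm (P_T U M))\<^sup>2 = (norm (M ** U))\<^sup>2 + (norm (projU U ** M ** projU_perp U))\<^sup>2"
proof -
  have "inner (M ** projU U) (projU U ** M ** projU_perp U)
      = inner (M ** (projU U ** projU_perp U)) (projU U ** M)"
    by (simp add: inner_matrix_mult_right matrix_mul_assoc)
  then have "orthogonal (M ** projU U) (projU U ** M ** projU_perp U)"
    by (simp add: orthogonal_def projU_mult_perp)
  then show ?thesis unfolding P_T_def by (simp add: norm_add_Pythagorean norm_mult_projU)
qed

lemma norm_mult_U_le_P_T: "norm (M ** U) \<le> norm (P_T U M)"
  using norm_P_T_sq[of M] by (simp add: power2_le_imp_le)

lemma norm_projU_perp_mult_le: "norm (projU_perp U ** M) \<le> norm M"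
proof -
  have "inner (projU U ** M) (projU_perp U ** M) = inner (projU_perp U ** projU U ** M) M"
    by (simp add: inner_matrix_mult_left matrix_mul_assoc)
  then have "orthogonal (projU U ** M) (projU_perp U ** M)"
    by (simp add: orthogonal_def projU_perp_mult_projU)
  moreover have "M = projU U ** M + projU_perp U ** M"
    by (simp add: projU_perp_def matrix_diff_rdistrib)
  ultimately have "(norm M)\<^sup>2 = (norm (projU U ** M))\<^sup>2 + (norm (projU_perp U ** M))\<^sup>2"
    by (metis norm_add_Pythagorean)
  then show ?thesis by (simp add: power2_le_imp_le)
qed

lemma norm_P_T_le_hermitian:
  assumes "hermitian G"
  shows "norm (P_T U G) \<le> sqrt 2 * norm (G ** U)"
proof -
  have "cadj (projU U ** G ** projU_perp U) = projU_perp U ** (G ** projU U)"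
    using assms by (simp add: cadj_matrix_mult hermitian_def matrix_mul_assoc)
  then have "norm (projU U ** G ** projU_perp U) \<le> norm (G ** U)"
    using norm_projU_perp_mult_le[of "G ** projU U"] norm_mult_projU[of G] by (metis norm_cadj)
  then have "(norm (P_T U G))\<^sup>2 \<le> (sqrt 2 * norm (G ** U))\<^sup>2"
    by (simp add: norm_P_T_sq power_mult_distrib power_mono)
  then show ?thesis by (rule power2_le_imp_le) simp
qed

lemma norm_le_P_T_add_norm_sq:
  assumes "P_Tperp U H = V ** cadj V"
  shows "norm H \<le> norm (P_T U H) + (norm V)\<^sup>2"
  using P_T_add_P_Tperp[of H] assms norm_triangle_ineq[of "P_T U H" "V ** cadj V"]
    norm_matrix_mult_cadj_le[of V]
  by simp

lemma P_Tperp_matrix_mult_cadj: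
  "P_Tperp U (X ** cadj X) = (projU_perp U ** X) ** cadj (projU_perp U ** X)"
  unfolding P_Tperp_def by (simp add: cadj_matrix_mult matrix_mul_assoc)

lemma P_Tperp_low_rank_error:
  "P_Tperp U (X ** cadj X - U ** L ** cadj U) = P_Tperp U (X ** cadj X)"
  unfolding P_Tperp_def
  by (simp add: matrix_diff_ldistrib matrix_diff_rdistrib matrix_mul_assoc projU_perp_mult_U)

end

lemma meas_nth: "meas A M $ i = inner (A i) M"
  by (simp add: meas_def hinner_eq_inner)

lemma meas_add: "meas A (M + N) = meas A M + meas A N"
  by (simp add: vec_eq_iff meas_nth inner_add_right)

lemma meas_diff: "meas A (M - N) = meas A M - meas A N"
  by (simp add: vec_eq_iff meas_nth inner_diff_right)

lemma meas_scaleR: "meas A (c *\<^sub>R M) = c *\<^sub>R meas A M"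
  by (simp add: vec_eq_iff meas_nth)

lemma meas_adj_add: "meas_adj A (z + w) = meas_adj A z + meas_adj A w"
  by (simp add: meas_adj_def scaleR_add_left sum.distrib)

lemma meas_adj_diff: "meas_adj A (z - w) = meas_adj A z - meas_adj A w"
  by (simp add: meas_adj_def scaleR_diff_left sum_subtractf)

lemma inner_meas: "inner z (meas A H) = inner (meas_adj A z) H"
  by (simp add: meas_adj_def inner_sum_left inner_vec_def[of z] meas_nth)

lemma inner_meas_adj_quadratic:
  fixes A :: "'n::finite \<Rightarrow> complex^'d^'d"
  shows "inner v (meas_adj A z *v v) = (\<Sum>i\<in>UNIV. z$i * inner v (A i *v v))"
proof -
  have sum: "(\<Sum>i\<in>I. M i) *v v = (\<Sum>i\<in>I. M i *v v)" for I and M :: "'n \<Rightarrow> complex^'d^'d"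
    by (induction I rule: infinite_finite_induct) (auto simp: matrix_vector_mult_add_rdistrib)
  have "(c *\<^sub>R M) *v v = c *\<^sub>R (M *v v)" for c and M :: "complex^'d^'d"
    by (simp add: vec_eq_iff matrix_vector_mult_def scaleR_sum_right)
  then show ?thesis unfolding meas_adj_def sum by (simp add: inner_sum_right)
qed

lemma hermitian_meas_adj: "(\<And>i. hermitian (A i)) \<Longrightarrow> hermitian (meas_adj A z)"
  by (simp add: hermitian_def meas_adj_def cadj_sum)

definition vec_in_F :: "complex set \<Rightarrow> complex^'d \<Rightarrow> bool" where
  "vec_in_F F v \<longleftrightarrow> (\<forall>i. v$i \<in> F)"

context
  fixes F :: "complex set"
  assumes F: "F = \<real> \<or> F = UNIV"
begin

lemma F_closed:
  "a \<in> F \<Longrightarrow> b \<in> F \<Longrightarrow> a + b \<in> F"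
  "a \<in> F \<Longrightarrow> b \<in> F \<Longrightarrow> a - b \<in> F"
  "a \<in> F \<Longrightarrow> b \<in> F \<Longrightarrow> a * b \<in> F"
  "a \<in> F \<Longrightarrow> cnj a \<in> F"
  "complex_of_real c \<in> F"
  using F by (auto simp: Reals_cnj_iff)

lemma F_zero: "0 \<in> F"
  using F_closed(5)[of 0] by simp

lemma F_sum: "(\<And>x. x \<in> S \<Longrightarrow> f x \<in> F) \<Longrightarrow> sum f S \<in> F"
  by (induction S rule: infinite_finite_induct) (auto simp: F_zero F_closed)

lemma F_scaleR: "a \<in> F \<Longrightarrow> c *\<^sub>R a \<in> F"
  by (simp add: scaleR_conv_of_real F_closed)

lemma in_F_diff: "in_F F A \<Longrightarrow> in_F F B \<Longrightarrow> in_F F (A - B)"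
  by (simp add: in_F_def F_closed)

lemma in_F_matrix_mult: "in_F F A \<Longrightarrow> in_F F B \<Longrightarrow> in_F F (A ** B)"
  by (simp add: in_F_def matrix_matrix_mult_def F_closed F_sum)

lemma in_F_cadj: "in_F F A \<Longrightarrow> in_F F (cadj A)"
  by (simp add: in_F_def F_closed)

lemma in_F_meas_adj: "(\<And>i. in_F F (A i)) \<Longrightarrow> in_F F (meas_adj A z)"
  by (simp add: in_F_def meas_adj_def F_sum F_scaleR)

lemma vec_in_F_matrix_vector_mult: "in_F F A \<Longrightarrow> vec_in_F F v \<Longrightarrow> vec_in_F F (A *v v)"
  by (simp add: in_F_def vec_in_F_def matrix_vector_mult_def F_closed F_sum)

lemma vec_in_F_column: "in_F F A \<Longrightarrow> vec_in_F F (column j A)"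
  by (simp add: in_F_def vec_in_F_def column_def)

end

lemma norm_column_isometry:
  assumes "cadj U ** U = mat 1"
  shows "norm (column k U) = 1"
proof -
  have "(norm (column k U))\<^sup>2 = Re ((cadj U ** U)$k$k)"
    by (simp add: power2_norm_eq_inner inner_cvec column_def matrix_matrix_mult_def)
  then have "(norm (column k U))\<^sup>2 = 1" using assms by (simp add: mat_def)
  then show ?thesis by (metis norm_ge_zero power2_eq_1_iff neg_0_le_iff_le not_one_le_zero)
qed

lemma norm_sq_isometry:
  assumes "cadj U ** U = mat 1"
  shows "(norm (U::complex^'r^'d))\<^sup>2 = CARD('r)"
  using norm_column_isometry[OF assms] by (simp add: norm_sq_columns)

context
  fixes U :: "complex^'r^'d" and lam :: "real^'r" and Z :: "complex^'d^'d"
  assumes isometry: "cadj U ** U = mat 1"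
    and lam_pos: "\<And>k. lam $ k > 0"
    and eig: "Z = U ** (\<chi> i j. if i = j then complex_of_real (lam $ i) else 0) ** cadj U"
begin

lemma column_mult_diag:
  "column k (U ** (\<chi> i j. if i = j then complex_of_real (lam $ i) else 0)) = lam$k *\<^sub>R column k U"
  by (simp add: vec_eq_iff column_def matrix_matrix_mult_def if_distrib if_distribR cong: if_cong)
    (simp add: scaleR_conv_of_real mult.commute)

lemma eigenvector_column:
  "Z *v column k U = lam$k *\<^sub>R column k U"
proof -
  have "Z ** U = U ** (\<chi> i j. if i = j then complex_of_real (lam $ i) else 0)"
    unfolding eig by (simp add: matrix_mul_assoc[symmetric] isometry)
  then show ?thesis using column_matrix_mult[of k Z U] column_mult_diag by simp
qed

lemma inner_eig_decomposition:
  "inner S Z = (\<Sum>k\<in>UNIV. lam$k * inner (column k U) (S *v column k U))"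
proof -
  have "inner S Z = inner (S ** U) (U ** (\<chi> i j. if i = j then complex_of_real (lam $ i) else 0))"
    unfolding eig by (simp add: inner_matrix_mult_right)
  also have "\<dots> = (\<Sum>k\<in>UNIV. inner (S *v column k U) (lam$k *\<^sub>R column k U))"
    unfolding inner_columns[of "S ** U"] column_matrix_mult[of _ S U] column_mult_diag ..
  finally show ?thesis by (simp add: inner_commute)
qed

lemma nonzero_eigenvalues_subset:
  "{\<mu>::real. \<mu> \<noteq> 0 \<and> (\<exists>v. v \<noteq> 0 \<and> Z *v v = complex_of_real \<mu> *s v)} \<subseteq> range (($) lam)"
proof
  fix \<mu> assume "\<mu> \<in> {\<mu>::real. \<mu> \<noteq> 0 \<and> (\<exists>v. v \<noteq> 0 \<and> Z *v v = complex_of_real \<mu> *s v)}"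
  then obtain v where "\<mu> \<noteq> 0" "v \<noteq> 0" and ev: "Z *v v = complex_of_real \<mu> *s v" by auto
  define L :: "complex^'r^'r" where "L = (\<chi> i j. if i = j then complex_of_real (lam $ i) else 0)"
  define w where "w = cadj U *v v"
  have Zv: "Z *v v = U *v (L *v w)"
    unfolding eig w_def L_def by (simp add: matrix_vector_mul_assoc matrix_mul_assoc)
  have "complex_of_real \<mu> *s w = cadj U *v (Z *v v)"
    unfolding w_def ev by (simp add: vec_eq_iff matrix_vector_mult_def sum_distrib_left mult_ac)
  also have "\<dots> = L *v w"
    unfolding Zv by (simp add: matrix_vector_mul_assoc matrix_mul_assoc isometry)
  finally have eq: "complex_of_real \<mu> *s w = L *v w" .
  have "w \<noteq> 0"
  proof
    assume "w = 0"
    then have "complex_of_real \<mu> *s v = 0" using Zv ev by simp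
    with \<open>\<mu> \<noteq> 0\<close> \<open>v \<noteq> 0\<close> show False by (simp add: vec_eq_iff)
  qed
  then obtain k where wk: "w$k \<noteq> 0" by (auto simp: vec_eq_iff)
  have "(L *v w)$k = complex_of_real (lam$k) * w$k"
    unfolding L_def matrix_vector_mult_def by (simp add: if_distrib if_distribR cong: if_cong)
  then have "complex_of_real \<mu> * w$k = complex_of_real (lam$k) * w$k"
    using eq by (metis vector_smult_component)
  then show "\<mu> \<in> range (($) lam)" using wk by simp
qed

lemma min_nonzero_eig_pos: "0 < min_nonzero_eig Z"
  and min_nonzero_eig_le: "min_nonzero_eig Z \<le> lam$k"
proof -
  let ?E = "{\<mu>::real. \<mu> \<noteq> 0 \<and> (\<exists>v. v \<noteq> 0 \<and> Z *v v = complex_of_real \<mu> *s v)}"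
  have fin: "finite ?E"
    using nonzero_eigenvalues_subset by (rule finite_subset) simp
  have lam_in: "lam$j \<in> ?E" for j
  proof -
    have "column j U \<noteq> 0" using norm_column_isometry[OF isometry, of j] by auto
    moreover have "Z *v column j U = complex_of_real (lam$j) *s column j U"
      using eigenvector_column[of j] by (simp add: vec_eq_iff) (simp add: scaleR_conv_of_real)
    ultimately show ?thesis using lam_pos[of j] by auto
  qed
  then have "Min ?E \<in> range (($) lam)"
    using nonzero_eigenvalues_subset Min_in[OF fin] by blast
  then show "0 < min_nonzero_eig Z"
    unfolding min_nonzero_eig_def using lam_pos by auto
  show "min_nonzero_eig Z \<le> lam$k"
    unfolding min_nonzero_eig_def using fin lam_in by (rule Min_le)
qed

end

text \<open>The gradient of \<open>X \<mapsto> \<parallel>y - \<A>(X X\<^sup>*)\<parallel>\<^sup>2\<close> is \<open>4 (lsq_gradient A y (X X\<^sup>*)) X\<close>.\<close>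

definition lsq_gradient ::
  "('n::finite \<Rightarrow> complex^'d^'d) \<Rightarrow> real^'n \<Rightarrow> complex^'d^'d \<Rightarrow> complex^'d^'d" where
  "lsq_gradient A y W = meas_adj A (meas A W - y)"

lemma hermitian_lsq_gradient: "(\<And>i. hermitian (A i)) \<Longrightarrow> hermitian (lsq_gradient A y W)"
  unfolding lsq_gradient_def by (rule hermitian_meas_adj)

lemma inner_residual_meas: "inner (y - meas A W) (meas A M) = - inner (lsq_gradient A y W) M"
  by (simp add: lsq_gradient_def inner_meas meas_adj_diff inner_diff_left)

lemma norm_diff_quadratic_sq:
  fixes v0 v1 v2 :: "'a::real_inner"
  shows "(norm (v0 - t *\<^sub>R v1 - t\<^sup>2 *\<^sub>R v2))\<^sup>2
    = (norm v0)\<^sup>2 + (-2 * inner v0 v1) * t + ((norm v1)\<^sup>2 - 2 * inner v0 v2) * t\<^sup>2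
      + (2 * inner v1 v2) * t^3 + (norm v2)\<^sup>2 * t^4"
  unfolding power2_norm_eq_inner
  by (simp add: inner_commute[of v1 v0]
      inner_commute[of v2 v0] inner_commute[of v2 v1] power2_eq_square power3_eq_cube
      power4_eq_xxxx algebra_simps)

lemma deriv_quartic_at_0:
  fixes a0 a1 a2 a3 a4 :: real
  assumes g: "g = (\<lambda>t. a0 + a1*t + a2*t\<^sup>2 + a3*t^3 + a4*t^4)"
  shows "deriv g 0 = a1" "deriv (deriv g) 0 = 2*a2"
proof -
  have d: "deriv g = (\<lambda>t. a1 + 2*a2*t + 3*a3*t\<^sup>2 + 4*a4*t^3)"
  proof
    fix t :: real
    show "deriv g t = a1 + 2*a2*t + 3*a3*t\<^sup>2 + 4*a4*t^3"
      unfolding g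
      by (rule DERIV_imp_deriv)
        (auto intro!: derivative_eq_intros simp: power2_eq_square power3_eq_cube algebra_simps)
  qed
  show "deriv g 0 = a1" by (simp add: d)
  show "deriv (deriv g) 0 = 2*a2"
    unfolding d by (rule DERIV_imp_deriv) (auto intro!: derivative_eq_intros)
qed

text \<open>Along a line \<open>X + t D\<close> the objective is a quartic polynomial in \<open>t\<close>, so the
  derivatives in the definition of \<open>socp\<close> can be read off its coefficients.\<close>

lemma socp_lsq_derivative_conditions:
  fixes A :: "'n::finite \<Rightarrow> complex^'d::finite^'d" and X D :: "complex^'p::finite^'d"
  assumes crit: "socp F (\<lambda>W. (norm (y - meas A (W ** cadj W)))\<^sup>2) X" and D: "in_F F D"
  shows "inner (lsq_gradient A y (X ** cadj X)) (X ** cadj D + D ** cadj X) = 0"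
    and "0 \<le> (norm (meas A (X ** cadj D + D ** cadj X)))\<^sup>2
             + 2 * inner (lsq_gradient A y (X ** cadj X)) (D ** cadj D)"
proof -
  define v0 where "v0 = y - meas A (X ** cadj X)"
  define v1 where "v1 = meas A (X ** cadj D + D ** cadj X)"
  define v2 where "v2 = meas A (D ** cadj D)"
  have line: "(\<lambda>t. (norm (y - meas A ((X + t *\<^sub>R D) ** cadj (X + t *\<^sub>R D))))\<^sup>2)
    = (\<lambda>t. (norm v0)\<^sup>2 + (-2 * inner v0 v1) * t + ((norm v1)\<^sup>2 - 2 * inner v0 v2) * t\<^sup>2
           + (2 * inner v1 v2) * t^3 + (norm v2)\<^sup>2 * t^4)"
  proof
    fix t :: real
    have "(X + t *\<^sub>R D) ** cadj (X + t *\<^sub>R D)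
        = X ** cadj X + t *\<^sub>R (X ** cadj D + D ** cadj X) + t\<^sup>2 *\<^sub>R (D ** cadj D)"
      by (simp add: matrix_mult_simps power2_eq_square algebra_simps)
    then have "y - meas A ((X + t *\<^sub>R D) ** cadj (X + t *\<^sub>R D)) = v0 - t *\<^sub>R v1 - t\<^sup>2 *\<^sub>R v2"
      unfolding v0_def v1_def v2_def by (simp add: meas_add meas_scaleR algebra_simps)
    then show "(norm (y - meas A ((X + t *\<^sub>R D) ** cadj (X + t *\<^sub>R D))))\<^sup>2
      = (norm v0)\<^sup>2 + (-2 * inner v0 v1) * t + ((norm v1)\<^sup>2 - 2 * inner v0 v2) * t\<^sup>2
        + (2 * inner v1 v2) * t^3 + (norm v2)\<^sup>2 * t^4"
      by (simp only: norm_diff_quadratic_sq)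
  qed
  from crit D
  have "deriv (\<lambda>t. (norm (y - meas A ((X + t *\<^sub>R D) ** cadj (X + t *\<^sub>R D))))\<^sup>2) 0 = 0"
    and "0 \<le> deriv (deriv (\<lambda>t. (norm (y - meas A ((X + t *\<^sub>R D) ** cadj (X + t *\<^sub>R D))))\<^sup>2)) 0"
    unfolding socp_def by auto
  then have "inner v0 v1 = 0" "0 \<le> (norm v1)\<^sup>2 - 2 * inner v0 v2"
    unfolding line deriv_quartic_at_0[OF refl] by simp_all
  then show "inner (lsq_gradient A y (X ** cadj X)) (X ** cadj D + D ** cadj X) = 0"
    and "0 \<le> (norm (meas A (X ** cadj D + D ** cadj X)))\<^sup>2
             + 2 * inner (lsq_gradient A y (X ** cadj X)) (D ** cadj D)"
    unfolding v0_def v1_def v2_def inner_residual_meas by simp_all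
qed

text \<open>First-order stationarity in the direction \<open>D = S X\<close> gives
  \<open>\<parallel>X\<^sup>* S\<parallel>\<^sup>2 + \<parallel>S X\<parallel>\<^sup>2 = 0\<close>.\<close>

lemma socp_lsq_gradient_mult_eq_0:
  fixes A :: "'n::finite \<Rightarrow> complex^'d::finite^'d" and X :: "complex^'p::finite^'d"
  assumes F: "F = \<real> \<or> F = UNIV" and A: "\<And>i. herm_F F (A i)"
    and crit: "socp F (\<lambda>W. (norm (y - meas A (W ** cadj W)))\<^sup>2) X"
  shows "lsq_gradient A y (X ** cadj X) ** X = 0"
proof -
  define S where "S = lsq_gradient A y (X ** cadj X)"
  have herm: "cadj S = S"
    using A hermitian_lsq_gradient unfolding S_def herm_F_def hermitian_def by blast
  have "in_F F S"
    unfolding S_def lsq_gradient_def using A by (simp add: in_F_meas_adj[OF F] herm_F_def)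
  then have "in_F F (S ** X)"
    using crit by (simp add: in_F_matrix_mult[OF F] socp_def)
  from socp_lsq_derivative_conditions(1)[OF crit this]
  have "inner S (X ** (cadj X ** S)) + inner S ((S ** X) ** cadj X) = 0"
    unfolding S_def[symmetric] using herm by (simp add: inner_add_right cadj_matrix_mult)
  moreover have "inner S (X ** (cadj X ** S)) = (norm (cadj X ** S))\<^sup>2"
    by (simp add: inner_matrix_mult_left power2_norm_eq_inner)
  moreover have "inner S ((S ** X) ** cadj X) = (norm (S ** X))\<^sup>2"
    by (simp add: inner_matrix_mult_right[of S "S ** X" "cadj X"] power2_norm_eq_inner)
  ultimately have "(norm (S ** X))\<^sup>2 = 0"
    by (metis add_nonneg_eq_0_iff zero_le_power2)
  then show ?thesis unfolding S_def by simp
qed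

definition outer_prod :: "complex^'d \<Rightarrow> complex^'e \<Rightarrow> complex^'e^'d" where
  "outer_prod x u = (\<chi> a b. x$a * cnj (u$b))"

definition single_column :: "complex^'d \<Rightarrow> 'p \<Rightarrow> complex^'p^'d" where
  "single_column u j = (\<chi> a b. if b = j then u$a else 0)"

lemma column_single_column [simp]: "column j (single_column u j) = u"
  by (simp add: vec_eq_iff column_def single_column_def)

lemma matrix_mult_cadj_single_column:
  "X ** cadj (single_column u j) = outer_prod (column j X) u"
  by (simp add: vec_eq_iff matrix_matrix_mult_def single_column_def outer_prod_def column_def
      if_distrib if_distribR cong: if_cong)

lemma single_column_mult_cadj:
  "single_column u j ** cadj X = outer_prod u (column j X)"
  by (simp add: vec_eq_iff matrix_matrix_mult_def single_column_def outer_prod_def column_def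
      if_distrib if_distribR cong: if_cong)

lemma inner_outer_prod:
  assumes "hermitian (A::complex^'d^'d)"
  shows "inner A (outer_prod x u) = inner u (A *v x)"
proof -
  have "inner A (outer_prod x u) = (\<Sum>a\<in>UNIV. \<Sum>b\<in>UNIV. Re (cnj (u$b) * (A$b$a * x$a)))"
  proof -
    have "cnj (A$a$b) = A$b$a" for a b using hermitian_nth[OF assms, of b a] by simp
    then show ?thesis unfolding inner_matrix outer_prod_def by (simp add: mult_ac)
  qed
  also have "\<dots> = (\<Sum>b\<in>UNIV. \<Sum>a\<in>UNIV. Re (cnj (u$b) * (A$b$a * x$a)))"
    by (rule sum.swap)
  also have "\<dots> = inner u (A *v x)"
    unfolding inner_cvec matrix_vector_mult_def by (simp add: sum_distrib_left)
  finally show ?thesis .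
qed

lemma socp_lsq_single_column:
  fixes A :: "'n::finite \<Rightarrow> complex^'d::finite^'d" and X :: "complex^'p::finite^'d"
  assumes F: "F = \<real> \<or> F = UNIV" and A: "\<And>i. hermitian (A i)"
    and crit: "socp F (\<lambda>W. (norm (y - meas A (W ** cadj W)))\<^sup>2) X" and u: "vec_in_F F u"
  shows "0 \<le> (\<Sum>i\<in>UNIV. 4 * (inner u (A i *v column j X))\<^sup>2)
             + 2 * inner u (lsq_gradient A y (X ** cadj X) *v u)"
proof -
  have "in_F F (single_column u j)"
    using u F_zero[OF F] by (simp add: in_F_def vec_in_F_def single_column_def)
  from socp_lsq_derivative_conditions(2)[OF crit this]
  have "0 \<le> (norm (meas A (outer_prod (column j X) u + outer_prod u (column j X))))\<^sup>2
          + 2 * inner (lsq_gradient A y (X ** cadj X)) (outer_prod u u)"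
    using single_column_mult_cadj[of u j "single_column u j"]
    by (simp add: matrix_mult_cadj_single_column single_column_mult_cadj)
  moreover have "meas A (outer_prod (column j X) u + outer_prod u (column j X))
      = (\<chi> i. 2 * inner u (A i *v column j X))"
    using hermitian_inner_commute[OF A]
    by (simp add: vec_eq_iff meas_nth inner_add_right inner_outer_prod[OF A])
  moreover have "(norm (\<chi> i. 2 * inner u (A i *v column j X)))\<^sup>2
      = (\<Sum>i\<in>UNIV. 4 * (inner u (A i *v column j X))\<^sup>2)"
    unfolding power2_norm_eq_inner by (simp add: inner_vec_def power2_eq_square)
  ultimately show ?thesis
    by (simp add: inner_outer_prod[OF hermitian_lsq_gradient[OF A]])
qed

text \<open>Summing the second-order condition over the directions \<open>u e\<^sub>j\<^sup>*\<close>, \<open>j \<le> p\<close>, and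
  bounding \<open>\<Sum>\<^sub>j \<langle>u, A\<^sub>i x\<^sub>j\<rangle>\<^sup>2 \<le> \<langle>u, A\<^sub>i u\<rangle> \<langle>A\<^sub>i, X X\<^sup>*\<rangle>\<close> by Cauchy--Schwarz
  turns the curvature term into \<open>4 \<langle>u, (S + \<A>\<^sup>*(y)) u\<rangle>\<close>.\<close>

lemma socp_lsq_gradient_lower_bound:
  fixes A :: "'n::finite \<Rightarrow> complex^'d::finite^'d" and X :: "complex^'p::finite^'d"
  assumes F: "F = \<real> \<or> F = UNIV" and A: "\<And>i. hermitian (A i) \<and> psd (A i)"
    and crit: "socp F (\<lambda>W. (norm (y - meas A (W ** cadj W)))\<^sup>2) X" and u: "vec_in_F F u"
  shows "- (2 / (real CARD('p) + 2)) * op_norm (meas_adj A y) * (norm u)\<^sup>2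
           \<le> inner u (lsq_gradient A y (X ** cadj X) *v u)"
proof -
  define S where "S = lsq_gradient A y (X ** cadj X)"
  define q where "q = inner u (S *v u)"
  define b where "b i j = inner u (A i *v column j X)" for i j
  have "0 \<le> (\<Sum>j\<in>(UNIV::'p set). (\<Sum>i\<in>UNIV. 4 * (b i j)\<^sup>2) + 2 * q)"
    unfolding b_def q_def S_def using socp_lsq_single_column[OF F _ crit u] A
    by (intro sum_nonneg) blast
  also have "\<dots> = (\<Sum>i\<in>UNIV. \<Sum>j\<in>UNIV. 4 * (b i j)\<^sup>2) + 2 * CARD('p) * q"
    by (simp add: sum.distrib sum.swap[of _ "UNIV::'p set"])
  also have "(\<Sum>i\<in>UNIV. \<Sum>j\<in>UNIV. 4 * (b i j)\<^sup>2)
      \<le> (\<Sum>i\<in>UNIV. 4 * (inner u (A i *v u) * meas A (X ** cadj X) $ i))"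
  proof (intro sum_mono)
    fix i
    have "(\<Sum>j\<in>UNIV. 4 * (b i j)\<^sup>2)
        \<le> (\<Sum>j\<in>UNIV. 4 * (inner u (A i *v u) * inner (column j X) (A i *v column j X)))"
      unfolding b_def using A by (intro sum_mono mult_left_mono psd_inner_Cauchy_Schwarz) auto
    then show "(\<Sum>j\<in>UNIV. 4 * (b i j)\<^sup>2) \<le> 4 * (inner u (A i *v u) * meas A (X ** cadj X) $ i)"
      by (simp add: meas_nth inner_matrix_mult_cadj sum_distrib_left)
  qed
  also have "(\<Sum>i\<in>UNIV. 4 * (inner u (A i *v u) * meas A (X ** cadj X) $ i))
      = 4 * inner u (meas_adj A (meas A (X ** cadj X)) *v u)"
    by (simp add: inner_meas_adj_quadratic sum_distrib_left mult_ac)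
  also have "\<dots> = 4 * q + 4 * inner u (meas_adj A y *v u)"
    unfolding q_def S_def lsq_gradient_def
    by (simp add: meas_adj_diff matrix_vector_mult_diff_rdistrib inner_diff_right)
  also have "inner u (meas_adj A y *v u) \<le> op_norm (meas_adj A y) * (norm u)\<^sup>2"
    using abs_inner_le_op_norm abs_le_D1 by blast
  finally have "- (4 * op_norm (meas_adj A y) * (norm u)\<^sup>2) \<le> (2 * CARD('p) + 4) * q"
    by (simp add: algebra_simps)
  then show ?thesis
    unfolding q_def S_def by (simp add: field_simps)
qed

lemma hermitian_quadratic_kernel_shift:
  assumes "hermitian S" "S ** X = 0"
  shows "inner (X *v c - w) (S *v (X *v c - w)) = inner w (S *v w)"
proof -
  have "S *v (X *v c) = 0" using assms by (simp add: matrix_vector_mul_assoc)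
  moreover have "inner (X *v c) (S *v w) = inner w (S *v (X *v c))"
    by (rule hermitian_inner_commute[OF assms(1)])
  ultimately show ?thesis by (simp add: matrix_vector_mult_diff_distrib inner_diff_left)
qed

text \<open>Since \<open>S X = 0\<close>, in the quadratic form of \<open>S\<close> the eigenvector
  \<open>\<lambda>\<^sub>k u\<^sub>k = X (X\<^sup>* u\<^sub>k) - H u\<^sub>k\<close> may be replaced by \<open>H u\<^sub>k\<close>, where \<open>H = X X\<^sup>* - Z\<close>.\<close>

lemma neg_inner_low_rank_le:
  fixes S :: "complex^'d::finite^'d" and X :: "complex^'p::finite^'d" and U :: "complex^'r::finite^'d"
  assumes F: "F = \<real> \<or> F = UNIV" and S: "hermitian S" "S ** X = 0"
    and lower: "\<And>u. vec_in_F F u \<Longrightarrow> - c * (norm u)\<^sup>2 \<le> inner u (S *v u)" and c: "0 \<le> c"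
    and isometry: "cadj U ** U = mat 1" and lam_pos: "\<And>k. lam $ k > 0"
    and eig: "Z = U ** (\<chi> i j. if i = j then complex_of_real (lam $ i) else 0) ** cadj U"
    and U_F: "in_F F U" and H_F: "in_F F (X ** cadj X - Z)"
  shows "- inner S Z \<le> c / min_nonzero_eig Z * (norm ((X ** cadj X - Z) ** U))\<^sup>2"
proof -
  define H where "H = X ** cadj X - Z"
  define lr where "lr = min_nonzero_eig Z"
  have lr: "0 < lr" "\<And>k. lr \<le> lam$k"
    unfolding lr_def using min_nonzero_eig_pos min_nonzero_eig_le isometry lam_pos eig by blast+
  have eig_term: "- (lam$k * inner (column k U) (S *v column k U)) \<le> c / lr * (norm (H *v column k U))\<^sup>2"
    for k
  proof -
    define v where "v = H *v column k U"
    have "lam$k *\<^sub>R column k U = X *v (cadj X *v column k U) - v"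
      using eigenvector_column[OF isometry lam_pos eig, of k]
      by (simp add: v_def H_def matrix_vector_mul_assoc matrix_vector_mult_diff_rdistrib)
    then have "inner (lam$k *\<^sub>R column k U) (S *v (lam$k *\<^sub>R column k U)) = inner v (S *v v)"
      using hermitian_quadratic_kernel_shift[OF S] by simp
    then have "(lam$k)\<^sup>2 * inner (column k U) (S *v column k U) = inner v (S *v v)"
      by (simp add: matrix_vector_mult_scaleR power2_eq_square)
    moreover have "- inner v (S *v v) \<le> c * (norm v)\<^sup>2"
      using lower[of v] U_F H_F F
      by (simp add: v_def H_def vec_in_F_matrix_vector_mult vec_in_F_column)
    ultimately have "- (lam$k * inner (column k U) (S *v column k U)) \<le> c / lam$k * (norm v)\<^sup>2"
      using lam_pos[of k] by (simp add: power2_eq_square field_simps)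
    also have "\<dots> \<le> c / lr * (norm v)\<^sup>2"
      using lr lam_pos[of k] c by (intro mult_right_mono divide_left_mono) auto
    finally show ?thesis unfolding v_def .
  qed
  have "- inner S Z \<le> (\<Sum>k\<in>UNIV. c / lr * (norm (H *v column k U))\<^sup>2)"
    unfolding inner_eig_decomposition[OF isometry lam_pos eig]
    using eig_term by (simp add: sum_negf[symmetric] sum_mono)
  also have "\<dots> = c / lr * (norm (H ** U))\<^sup>2"
    by (simp add: norm_sq_columns[of "H ** U"] column_matrix_mult sum_distrib_left)
  finally show ?thesis unfolding H_def lr_def .
qed

lemma norm_meas_error_sq_eq:
  assumes "y = meas A Z + xi" and "inner (lsq_gradient A y W) W = 0"
  shows "(norm (meas A (W - Z)))\<^sup>2
           = - inner (lsq_gradient A y W) Z + inner (meas_adj A xi) (W - Z)"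
proof -
  have "meas A (W - Z) = (meas A W - y) + xi"
    using assms(1) by (simp add: meas_diff)
  then have "(norm (meas A (W - Z)))\<^sup>2 = inner ((meas A W - y) + xi) (meas A (W - Z))"
    by (simp add: power2_norm_eq_inner)
  also have "\<dots> = inner (lsq_gradient A y W) (W - Z) + inner (meas_adj A xi) (W - Z)"
    by (simp only: inner_meas meas_adj_add inner_add_left lsq_gradient_def)
  finally show ?thesis using assms(2) by (simp only: inner_diff_right)
qed

lemma inner_noise_le:
  fixes U :: "complex^'r::finite^'d"
  assumes isometry: "cadj U ** U = mat 1" and G: "hermitian G"
    and H: "P_Tperp U H = V ** cadj V"
  shows "inner G H \<le> sqrt (2 * real CARD('r)) * op_norm G * norm (P_T U H) + op_norm G * (norm V)\<^sup>2"
proof -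
  have "norm U = sqrt CARD('r)"
    using real_sqrt_unique[OF norm_sq_isometry[OF isometry]] by simp
  have "norm (P_T U G) \<le> sqrt 2 * norm (G ** U)"
    by (rule norm_P_T_le_hermitian[OF isometry G])
  also have "\<dots> \<le> sqrt 2 * (op_norm G * sqrt CARD('r))"
    using norm_matrix_mult_le_op_norm[of G U] \<open>norm U = sqrt CARD('r)\<close> by simp
  finally have "norm (P_T U G) \<le> sqrt (2 * real CARD('r)) * op_norm G"
    by (simp add: real_sqrt_mult mult_ac)
  then have "inner (P_T U G) (P_T U H) \<le> sqrt (2 * real CARD('r)) * op_norm G * norm (P_T U H)"
    using norm_cauchy_schwarz[of "P_T U G" "P_T U H"] by (smt (verit) mult_right_mono norm_ge_zero)
  moreover have "inner G H = inner (P_T U G) (P_T U H) + inner G (V ** cadj V)"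
  proof -
    have "inner G H = inner G (P_T U H) + inner G (P_Tperp U H)"
      by (simp only: inner_add_right[symmetric] P_T_add_P_Tperp[OF isometry])
    then show ?thesis
      by (simp only: inner_P_T[OF isometry, of G H] H)
  qed
  ultimately show ?thesis
    using inner_matrix_mult_cadj_le_op_norm[of G V] by linarith
qed

lemma inner_psd_matrix_mult_cadj_nonneg: "psd M \<Longrightarrow> 0 \<le> inner M (B ** cadj B)"
  unfolding inner_matrix_mult_cadj psd_iff_inner by (simp add: sum_nonneg)

lemma dual_certificate_bound:
  assumes isometry: "cadj U ** U = mat 1"
    and dual1: "loewner_ge (P_Tperp U (meas_adj A la)) (projU_perp U)"
    and dual2: "norm (P_T U (meas_adj A la)) \<le> eps"
    and H: "P_Tperp U H = (projU_perp U ** X) ** cadj (projU_perp U ** X)"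
  shows "(norm (projU_perp U ** X))\<^sup>2 - eps * norm (P_T U H) \<le> norm la * norm (meas A H)"
proof -
  define Y where "Y = meas_adj A la"
  define V where "V = projU_perp U ** X"
  have V: "projU_perp U ** V = V"
    unfolding V_def by (simp add: matrix_mul_assoc projU_perp_idem[OF isometry])
  then have "P_Tperp U (V ** cadj V) = V ** cadj V"
    unfolding P_Tperp_def
    by (metis cadj_matrix_mult cadj_projU_perp[OF isometry] matrix_mul_assoc)
  then have "inner Y (P_Tperp U H) = inner (P_Tperp U Y) (V ** cadj V)"
    using H inner_P_Tperp[OF isometry, of Y "V ** cadj V"] unfolding V_def by simp
  moreover have "inner Y H = inner Y (P_T U H) + inner Y (P_Tperp U H)"
    by (simp only: inner_add_right[symmetric] P_T_add_P_Tperp[OF isometry])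
  moreover have "inner Y (P_T U H) = inner (P_T U Y) (P_T U H)"
    by (rule inner_P_T[OF isometry])
  moreover have "\<bar>inner (P_T U Y) (P_T U H)\<bar> \<le> eps * norm (P_T U H)"
    using Cauchy_Schwarz_ineq2[of "P_T U Y" "P_T U H"] mult_right_mono[OF dual2, of "norm (P_T U H)"]
    unfolding Y_def by simp
  moreover have "inner (projU_perp U) (V ** cadj V) = (norm V)\<^sup>2"
    using V column_matrix_mult[of _ "projU_perp U" V]
    by (simp add: inner_matrix_mult_cadj inner_columns[of V V] power2_norm_eq_inner)
  moreover have "0 \<le> inner (P_Tperp U Y - projU_perp U) (V ** cadj V)"
    using dual1 unfolding Y_def loewner_ge_def by (rule inner_psd_matrix_mult_cadj_nonneg)
  moreover have "inner Y H \<le> norm la * norm (meas A H)"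
    unfolding Y_def inner_meas[symmetric] by (rule norm_cauchy_schwarz)
  ultimately show ?thesis unfolding V_def by (simp add: inner_diff_left)
qed

lemma socp_norm_meas_error_sq_le:
  fixes A :: "'n::finite \<Rightarrow> complex^'d::finite^'d" and X :: "complex^'p::finite^'d"
    and U :: "complex^'r::finite^'d"
  assumes F: "F = \<real> \<or> F = UNIV" and A: "\<And>i. herm_F F (A i) \<and> psd (A i)"
    and U_F: "in_F F U" and isometry: "cadj U ** U = mat 1" and lam_pos: "\<And>k. lam $ k > 0"
    and eig: "Z = U ** (\<chi> i j. if i = j then complex_of_real (lam $ i) else 0) ** cadj U"
    and Z_F: "in_F F Z" and y: "y = meas A Z + xi"
    and crit: "socp F (\<lambda>W. (norm (y - meas A (W ** cadj W)))\<^sup>2) X"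
  shows "(norm (meas A (X ** cadj X - Z)))\<^sup>2
    \<le> 2 / (real CARD('p) + 2) * op_norm (meas_adj A y) / min_nonzero_eig Z
        * (norm (P_T U (X ** cadj X - Z)))\<^sup>2
      + sqrt (2 * real CARD('r)) * op_norm (meas_adj A xi) * norm (P_T U (X ** cadj X - Z))
      + op_norm (meas_adj A xi) * (norm (projU_perp U ** X))\<^sup>2"
proof -
  define S where "S = lsq_gradient A y (X ** cadj X)"
  define H where "H = X ** cadj X - Z"
  define c where "c = 2 / (real CARD('p) + 2) * op_norm (meas_adj A y)"
  have herm: "\<And>i. hermitian (A i)" using A by (simp add: herm_F_def)
  have SX: "S ** X = 0"
    unfolding S_def using socp_lsq_gradient_mult_eq_0[OF F _ crit] A by blast
  have H_F: "in_F F H"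
    using crit Z_F unfolding H_def socp_def by (simp add: in_F_diff in_F_matrix_mult in_F_cadj F)
  have "inner S (X ** cadj X) = 0"
    by (simp add: inner_matrix_mult_right[of S X "cadj X"] SX)
  then have "(norm (meas A H))\<^sup>2 = - inner S Z + inner (meas_adj A xi) H"
    unfolding S_def H_def by (rule norm_meas_error_sq_eq[OF y])
  moreover have "- inner S Z \<le> c / min_nonzero_eig Z * (norm (H ** U))\<^sup>2"
    unfolding H_def
  proof (rule neg_inner_low_rank_le[OF F _ SX _ _ isometry lam_pos eig U_F])
    show "hermitian S" unfolding S_def by (rule hermitian_lsq_gradient[OF herm])
    show "- c * (norm u)\<^sup>2 \<le> inner u (S *v u)" if "vec_in_F F u" for u
      using socp_lsq_gradient_lower_bound[OF F _ crit that] A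
      unfolding S_def c_def herm_F_def by (simp add: mult.assoc)
    show "0 \<le> c" unfolding c_def by (simp add: op_norm_nonneg)
  qed (use H_F H_def in simp)
  moreover have "c / min_nonzero_eig Z * (norm (H ** U))\<^sup>2
      \<le> c / min_nonzero_eig Z * (norm (P_T U H))\<^sup>2"
    using min_nonzero_eig_pos[OF isometry lam_pos eig] norm_mult_U_le_P_T[OF isometry, of H]
    by (intro mult_left_mono power_mono) (auto simp: c_def op_norm_nonneg)
  moreover have "inner (meas_adj A xi) H
      \<le> sqrt (2 * real CARD('r)) * op_norm (meas_adj A xi) * norm (P_T U H)
        + op_norm (meas_adj A xi) * (norm (projU_perp U ** X))\<^sup>2"
    by (rule inner_noise_le[OF isometry hermitian_meas_adj[OF herm]])
      (simp add: H_def eig P_Tperp_low_rank_error[OF isometry] P_Tperp_matrix_mult_cadj[OF isometry])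
  ultimately show ?thesis unfolding H_def c_def by linarith
qed

lemma error_le_meas_error:
  fixes n mu L eps la a t N :: real
  assumes n: "n > 0" and L: "L \<ge> 0" and eps: "eps \<ge> 0" and gap: "mu > L * eps"
    and dual: "t - eps * a \<le> la * N" and isom: "mu * a - L * t \<le> N / sqrt n"
  shows "a \<le> (1 + L * sqrt n * la) / (mu - L * eps) * N / sqrt n"
    and "a + t \<le> (1 + eps + sqrt n * la * (L + mu)) / (mu - L * eps) * N / sqrt n"
proof -
  define s where "s = sqrt n"
  have s: "s > 0" using n by (simp add: s_def)
  define d where "d = mu - L * eps"
  have d: "d > 0" using gap by (simp add: d_def)
  have "L * t \<le> L * (eps * a + la * N)"
    using dual L by (intro mult_left_mono) auto
  then have "d * a \<le> N / s + L * la * N"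
    using isom unfolding d_def s_def by (simp add: algebra_simps)
  also have "\<dots> = d * ((1 + L * s * la) / d * N / s)"
    using s d by (simp add: field_simps)
  finally have "d * a \<le> d * ((1 + L * s * la) / d * N / s)" .
  then show a: "a \<le> (1 + L * sqrt n * la) / (mu - L * eps) * N / sqrt n"
    using d unfolding d_def s_def by (metis mult_le_cancel_left_pos)
  have "a + t \<le> (1 + eps) * a + la * N"
    using dual by (simp add: algebra_simps)
  also have "\<dots> \<le> (1 + eps) * ((1 + L * s * la) / d * N / s) + la * N"
    using a eps unfolding d_def s_def by (intro add_right_mono mult_left_mono) auto
  also have "\<dots> = (1 + eps + s * la * (L + mu)) / d * N / s"
    using s d unfolding d_def by (simp add: field_simps)
  finally show "a + t \<le> (1 + eps + sqrt n * la * (L + mu)) / (mu - L * eps) * N / sqrt n"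
    unfolding d_def s_def .
qed

text \<open>The curvature term is at most the fraction \<open>(\<tau> + 2)/(p + 2)\<close> of \<open>N\<^sup>2\<close>, so it
  is absorbed into the left-hand side when \<open>p > \<tau>\<close>.\<close>

lemma recovery_error_arith:
  fixes n a t N g gy lr p r tau C C' :: real
  assumes n: "n > 0" and a: "a \<ge> 0" and t: "t \<ge> 0" and g: "g \<ge> 0" and gy: "gy \<ge> 0"
    and lr: "lr > 0" and r: "r \<ge> 1"
    and a_le: "a \<le> C' * N / sqrt n" and at_le: "a + t \<le> C * N / sqrt n"
    and N_sq: "N\<^sup>2 \<le> 2 / (p + 2) * gy / lr * a\<^sup>2 + sqrt (2 * r) * g * a + g * t"
    and tau: "tau = 2 * C'\<^sup>2 * gy / (n * lr) - 2" and p: "p > tau"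
  shows "a + t \<le> (p + 2) / (p - tau) * C\<^sup>2 * sqrt (2 * r) * g / n"
proof -
  have "tau + 2 \<ge> 0" unfolding tau using n lr gy by simp
  then have p2: "p + 2 > 0" using p by linarith
  have "a\<^sup>2 \<le> (C' * N / sqrt n)\<^sup>2"
    using a a_le by (intro power_mono) auto
  then have "2 / (p + 2) * gy / lr * a\<^sup>2 \<le> 2 / (p + 2) * gy / lr * (C'\<^sup>2 * N\<^sup>2 / n)"
    using n p2 gy lr by (intro mult_left_mono) (auto simp: power_divide power_mult_distrib)
  also have "\<dots> = (tau + 2) / (p + 2) * N\<^sup>2"
    unfolding tau using n lr p2 by (simp add: field_simps)
  finally have curv: "2 / (p + 2) * gy / lr * a\<^sup>2 \<le> (tau + 2) / (p + 2) * N\<^sup>2" .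
  have "1 * (g * t) \<le> sqrt (2 * r) * (g * t)"
    using r g t by (intro mult_right_mono) auto
  then have "g * t \<le> sqrt (2 * r) * g * t"
    by (simp add: mult.assoc)
  then have "N\<^sup>2 \<le> (tau + 2) / (p + 2) * N\<^sup>2 + sqrt (2 * r) * g * (a + t)"
    using N_sq curv by (simp add: algebra_simps)
  then have "N\<^sup>2 * ((p - tau) / (p + 2)) \<le> sqrt (2 * r) * g * (a + t)"
    using p2 by (simp add: field_simps)
  then have N_sq': "N\<^sup>2 \<le> (p + 2) / (p - tau) * (sqrt (2 * r) * g * (a + t))"
    using p2 p by (simp add: field_simps)
  have "(a + t)\<^sup>2 \<le> (C * N / sqrt n)\<^sup>2"
    using a t at_le by (intro power_mono) auto
  also have "\<dots> = C\<^sup>2 * N\<^sup>2 / n"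
    using n by (simp add: power_divide power_mult_distrib)
  also have "\<dots> \<le> C\<^sup>2 * ((p + 2) / (p - tau) * (sqrt (2 * r) * g * (a + t))) / n"
    using N_sq' n by (intro divide_right_mono mult_left_mono) auto
  finally have sq: "(a + t) * (a + t) \<le> (a + t) * ((p + 2) / (p - tau) * C\<^sup>2 * sqrt (2 * r) * g / n)"
    by (simp add: power2_eq_square mult_ac)
  show ?thesis
  proof (cases "a + t = 0")
    case True
    then show ?thesis using p2 p g n r by simp
  next
    case False
    then have "a + t > 0" using a t by simp
    with sq show ?thesis by (metis mult_le_cancel_left_pos)
  qed
qed

theorem theorem5:
  fixes F :: "complex set"
    and A :: "'n::finite \<Rightarrow> complex^'d::finite^'d"
    and Xs :: "complex^'r::finite^'d"
    and Zs :: "complex^'d^'d"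
    and U :: "complex^'r^'d"
    and lam :: "real^'r"
    and xi :: "real^'n"
    and y :: "real^'n"
    and eps :: real
    and la :: "real^'n"
    and muT LT :: real
    and X :: "complex^'p::finite^'d"
  defines "n \<equiv> real CARD('n)"
    and "r \<equiv> real CARD('r)"
    and "p \<equiv> real CARD('p)"
    and "tau \<equiv> 2 * ((1 + LT * sqrt (real CARD('n)) * norm la) / (muT - LT * eps))\<^sup>2
                 * op_norm (meas_adj A y) / (real CARD('n) * min_nonzero_eig Zs) - 2"
  assumes F: "F = \<real> \<or> F = UNIV"
    and A_psd: "\<And>i. herm_F F (A i) \<and> psd (A i)"
    and Xs_F: "in_F F Xs"
    and Zs_def: "Zs = Xs ** cadj Xs"
    and U_F: "in_F F U"
    and U_orth: "cadj U ** U = mat 1"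
    and lam_pos: "\<And>i. lam $ i > 0"
    and Zs_eig: "Zs = U ** (\<chi> i j. if i = j then complex_of_real (lam $ i) else 0) ** cadj U"
    and y_def: "y = meas A Zs + xi"
    and eps_nonneg: "eps \<ge> 0"
    and dual1: "loewner_ge (P_Tperp U (meas_adj A la)) (projU_perp U)"
    and dual2: "fro_norm (P_T U (meas_adj A la)) \<le> eps"
    and muT_pos: "muT > 0" and LT_pos: "LT > 0"
    and isom: "\<And>H. herm_F F H \<Longrightarrow> psd (P_Tperp U H) \<Longrightarrow>
                 norm (meas A H) / sqrt n \<ge> muT * fro_norm (P_T U H) - LT * Re (trace (P_Tperp U H))"
    and gap: "muT > LT * eps"
    and p_gt: "p > tau"
    and crit: "socp F (\<lambda>W. (norm (y - meas A (W ** cadj W)))\<^sup>2) X"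
  shows "fro_norm (X ** cadj X - Zs)
           \<le> fro_norm (P_T U (X ** cadj X - Zs)) + Re (trace (P_Tperp U (X ** cadj X)))
       \<and> fro_norm (P_T U (X ** cadj X - Zs)) + Re (trace (P_Tperp U (X ** cadj X)))
           \<le> (p + 2) / (p - tau)
              * ((1 + eps + sqrt n * norm la * (LT + muT)) / (muT - LT * eps))\<^sup>2
              * sqrt (2 * r) * op_norm (meas_adj A xi) / n"
proof -
  define H where "H = X ** cadj X - Zs"
  define V where "V = projU_perp U ** X"
  have Zs_F: "in_F F Zs"
    unfolding Zs_def using Xs_F by (simp add: in_F_matrix_mult in_F_cadj F)
  have PTH: "P_Tperp U H = V ** cadj V"
    unfolding H_def V_def Zs_eig P_Tperp_low_rank_error[OF U_orth]
    by (rule P_Tperp_matrix_mult_cadj[OF U_orth])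
  have "herm_F F H"
    using crit Zs_F hermitian_matrix_mult_cadj[of X] hermitian_matrix_mult_cadj[of Xs]
    unfolding H_def Zs_def herm_F_def socp_def hermitian_def
    by (auto simp: in_F_diff in_F_matrix_mult in_F_cadj F)
  then have isom_H: "muT * norm (P_T U H) - LT * (norm V)\<^sup>2 \<le> norm (meas A H) / sqrt n"
    using isom[of H] PTH by (simp add: psd_matrix_mult_cadj Re_trace_matrix_mult_cadj fro_norm_eq_norm)
  have dual: "(norm V)\<^sup>2 - eps * norm (P_T U H) \<le> norm la * norm (meas A H)"
    using dual_certificate_bound[OF U_orth dual1 _ PTH[unfolded V_def]] dual2
    unfolding V_def by (simp add: fro_norm_eq_norm)
  have "norm (P_T U H) + (norm V)\<^sup>2 \<le> (p + 2) / (p - tau)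
      * ((1 + eps + sqrt n * norm la * (LT + muT)) / (muT - LT * eps))\<^sup>2
      * sqrt (2 * r) * op_norm (meas_adj A xi) / n"
    using socp_norm_meas_error_sq_le[OF F A_psd U_F U_orth lam_pos Zs_eig Zs_F y_def crit,
        folded H_def V_def p_def r_def]
      error_le_meas_error[OF _ _ eps_nonneg gap dual isom_H] p_gt tau_def n_def r_def LT_pos
      min_nonzero_eig_pos[OF U_orth lam_pos Zs_eig]
    by (intro recovery_error_arith) (auto simp: op_norm_nonneg)
  moreover have "Re (trace (P_Tperp U (X ** cadj X))) = (norm V)\<^sup>2"
    unfolding V_def P_Tperp_matrix_mult_cadj[OF U_orth] by (rule Re_trace_matrix_mult_cadj)
  ultimately show ?thesis
    using norm_le_P_T_add_norm_sq[OF U_orth PTH] unfolding fro_norm_eq_norm H_def by linarith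
qed

end
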